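(* For every $f\in\mathcal H_{(reg)}(X)$ there is a constant ${\rm Cst}$ such that the Lorentzian Fourier-Helgason transforms satisfy, for all $\xi\in C^+$ and $\nu\in\mathbb R$, $$|\tilde f_{\pm,\nu}(\xi)|\le{\rm Cst}\,\xi_0^{-1/2}\max(e^{\pm\pi\nu},1).$$
   Context: $[z\cdot z']=z_0z'_0-z_1z'_1-z_2z'_2$, $z^2=[z\cdot z]$; $X=\{x\in\mathbb R^3:x^2=-1\}$; ${\rm d}\sigma(x)=\frac{{\rm d}x_1{\rm d}x_2}{2|x_0|}$; $C^+=\{\xi\in\mathbb R^3\setminus\{0\}:\xi^2=0,\xi_0>0\}$. Parametrization $z(\lambda,\mu)=\big(\frac{1+\lambda\mu}{\lambda-\mu},\frac{1-\lambda\mu}{\lambda-\mu},\frac{\lambda+\mu}{\lambda-\mu}\big)$. $\mathcal H_{(reg)}(X)$: functions $f\in L^2(X,{\rm d}\sigma)$ with $|(\lambda-\mu)^{-1}f(z(\lambda,\mu))|\le c(1+|\lambda|)^{-1}(1+|\mu|)^{-1}$ for all real $\lambda\ne\mu$. Powers: for real $t\neq0$, $t_\pm^s=Y(t)|t|^s+e^{\pm i\pi s}Y(-t)|t|^s$ ($Y$ Heaviside). Lorentzian FH transforms: $\tilde f_{\pm,\nu}(\xi)=\int_X([x\cdot\xi])_\pm^{-\frac12-i\nu}f(x)\,{\rm d}\sigma(x)$. *)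

theory Defs
  imports "HOL-Analysis.Analysis"
begin

type_synonym pt3 = "real \<times> real \<times> real"

definition lform :: "pt3 \<Rightarrow> pt3 \<Rightarrow> real" where
  "lform z w = (case z of (z0, z1, z2) \<Rightarrow> case w of (w0, w1, w2) \<Rightarrow>
      z0 * w0 - z1 * w1 - z2 * w2)"

definition Xset :: "pt3 set" where
  "Xset = {x. lform x x = -1}"

definition Cplus :: "pt3 set" where
  "Cplus = {xi. xi \<noteq> (0,0,0) \<and> lform xi xi = 0 \<and> fst xi > 0}"

definition zpar :: "real \<Rightarrow> real \<Rightarrow> pt3" where
  "zpar l m = ((1 + l*m)/(l - m), (1 - l*m)/(l - m), (l + m)/(l - m))"

text \<open>The measure d sigma = dx1 dx2 / (2|x0|) on X: X is the union of two graphs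
  x0 = +sqrt(x1^2+x2^2-1) and x0 = -sqrt(x1^2+x2^2-1) over {x1^2+x2^2>1}
  (the circle x1^2+x2^2=1 is a null set); both sheets carry the density
  1/(2|x0|) with respect to Lebesgue measure dx1 dx2.\<close>
definition mu2 :: "(real \<times> real) measure" where
  "mu2 = density lborel (\<lambda>(a, b). if a^2 + b^2 > 1
            then ennreal (1 / (2 * sqrt (a^2 + b^2 - 1))) else 0)"

definition up :: "real \<times> real \<Rightarrow> pt3" where
  "up p = (case p of (a, b) \<Rightarrow> (sqrt (a^2 + b^2 - 1), a, b))"

definition dn :: "real \<times> real \<Rightarrow> pt3" where
  "dn p = (case p of (a, b) \<Rightarrow> (- sqrt (a^2 + b^2 - 1), a, b))"

definition intX :: "(pt3 \<Rightarrow> complex) \<Rightarrow> complex" where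
  "intX g = (LINT p|mu2. g (up p)) + (LINT p|mu2. g (dn p))"

definition L2X :: "(pt3 \<Rightarrow> complex) \<Rightarrow> bool" where
  "L2X f \<longleftrightarrow> (\<lambda>p. f (up p)) \<in> borel_measurable mu2 \<and> (\<lambda>p. f (dn p)) \<in> borel_measurable mu2
     \<and> integrable mu2 (\<lambda>p. (cmod (f (up p)))^2)
     \<and> integrable mu2 (\<lambda>p. (cmod (f (dn p)))^2)"

definition Hreg :: "(pt3 \<Rightarrow> complex) set" where
  "Hreg = {f. L2X f \<and> (\<exists>c. \<forall>l m. l \<noteq> m \<longrightarrow>
      cmod (f (zpar l m)) / \<bar>l - m\<bar> \<le> c / ((1 + \<bar>l\<bar>) * (1 + \<bar>m\<bar>)))}"

text \<open>t_{eps}^s for eps = 1 (the + sign) or eps = -1 (the - sign):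
  Y(t)|t|^s + e^{eps i pi s} Y(-t)|t|^s, with value 0 at t = 0 (a null set).\<close>
definition pmpow :: "real \<Rightarrow> real \<Rightarrow> complex \<Rightarrow> complex" where
  "pmpow eps t s = (if t > 0 then exp (s * of_real (ln t))
     else if t < 0 then exp (of_real eps * \<i> * of_real pi * s) * exp (s * of_real (ln (- t)))
     else 0)"

definition FH :: "real \<Rightarrow> real \<Rightarrow> (pt3 \<Rightarrow> complex) \<Rightarrow> pt3 \<Rightarrow> complex" where
  "FH eps nu f xi = intX (\<lambda>x. pmpow eps (lform x xi) (- 1/2 - \<i> * of_real nu) * f x)"

end

theory Submission
  imports Defs
begin

text \<open>
  Inverting the parametrisation z(\<lambda>, \<mu>) explicitly, the decay condition in Hreg gives
  |f(x)| \<le> c / |x'| on X, where x' = (x1, x2).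
  Moreover |t_{\<plusminus>}^{-1/2 - i \<nu>}| \<le> |t|^{-1/2} max(e^{\<plusminus>\<pi>\<nu>}, 1). Writing \<xi> = \<xi>0 (1, e) with |e| = 1,
  we have [x\<cdot>\<xi>] = \<xi>0 [x\<cdot>(1, e)], so the transform is bounded by c \<xi>0^{-1/2} max(e^{\<plusminus>\<pi>\<nu>}, 1) times
  the integral of |x0 - e\<cdot>x'|^{-1/2} |x'|^{-1} d\<sigma> over X. After the rotation of the plane taking e
  to (1, 0) this is the integral of an explicit kernel in the coordinates x', which is finite by
  Tonelli: its integral along the line x2 = w is O(|w^2 - 1|^{-3/4}), an integrable function of w.
\<close>

section \<open>Integrals of powers on the line\<close>

lemma nn_integral_abs_shift_le:
  fixes g :: "real \<Rightarrow> ennreal" and a :: real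
  assumes [measurable]: "g \<in> borel_measurable borel"
  shows "(\<integral>\<^sup>+x. g \<bar>x - a\<bar> \<partial>lborel) \<le> 2 * (\<integral>\<^sup>+x\<in>{0..}. g x \<partial>lborel)"
proof -
  let ?g = "\<lambda>x. g x * indicator {0..} x"
  have "(\<integral>\<^sup>+x. g \<bar>x - a\<bar> \<partial>lborel) \<le> (\<integral>\<^sup>+x. ?g (x - a) + ?g (a - x) \<partial>lborel)"
    by (intro nn_integral_mono) (auto split: split_indicator)
  also have "\<dots> = (\<integral>\<^sup>+x. ?g (x - a) \<partial>lborel) + (\<integral>\<^sup>+x. ?g (a - x) \<partial>lborel)"
    by (rule nn_integral_add) measurable
  also have "(\<integral>\<^sup>+x. ?g (x - a) \<partial>lborel) = (\<integral>\<^sup>+x. ?g x \<partial>lborel)"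
    using nn_integral_real_affine[of ?g 1 "- a"] by simp
  also have "(\<integral>\<^sup>+x. ?g (a - x) \<partial>lborel) = (\<integral>\<^sup>+x. ?g x \<partial>lborel)"
    using nn_integral_real_affine[of ?g "- 1" a] by simp
  finally show ?thesis by (simp add: mult_2)
qed

lemma nn_integral_powr_near_le:
  fixes a r \<alpha> :: real
  assumes "0 \<le> \<alpha>" "\<alpha> < 1" "0 \<le> r"
  shows "(\<integral>\<^sup>+x\<in>{x. \<bar>x - a\<bar> \<le> r}. ennreal (\<bar>x - a\<bar> powr - \<alpha>) \<partial>lborel)
           \<le> ennreal (2 * (r powr (1 - \<alpha>) / (1 - \<alpha>)))"
proof -
  let ?g = "\<lambda>y::real. ennreal (y powr - \<alpha>) * indicator {..r} y"
  have "((\<lambda>y. y powr - \<alpha>) has_integral (r powr (- \<alpha> + 1) / (- \<alpha> + 1))) {0..r}"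
    using assms by (intro has_integral_powr_from_0) auto
  then have "(\<integral>\<^sup>+y\<in>{0..r}. ennreal (y powr - \<alpha>) \<partial>lborel) = ennreal (r powr (1 - \<alpha>) / (1 - \<alpha>))"
    by (subst nn_integral_has_integral_lebesgue') auto
  moreover have "(\<integral>\<^sup>+y\<in>{0..}. ?g y \<partial>lborel) = (\<integral>\<^sup>+y\<in>{0..r}. ennreal (y powr - \<alpha>) \<partial>lborel)"
    by (intro nn_integral_cong) (auto split: split_indicator)
  moreover have "(\<integral>\<^sup>+x\<in>{x. \<bar>x - a\<bar> \<le> r}. ennreal (\<bar>x - a\<bar> powr - \<alpha>) \<partial>lborel)
      \<le> 2 * (\<integral>\<^sup>+y\<in>{0..}. ?g y \<partial>lborel)"
    using nn_integral_abs_shift_le[of ?g a] by (simp add: indicator_def)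
  moreover have "2 * ennreal (r powr (1 - \<alpha>) / (1 - \<alpha>)) = ennreal (2 * (r powr (1 - \<alpha>) / (1 - \<alpha>)))"
    by (metis ennreal_mult' ennreal_numeral zero_le_numeral)
  ultimately show ?thesis
    by simp
qed

lemma nn_integral_powr_tail_le:
  fixes r \<beta> :: real
  assumes "1 < \<beta>" "0 < r"
  shows "(\<integral>\<^sup>+x\<in>{x. r \<le> \<bar>x\<bar>}. ennreal (\<bar>x\<bar> powr - \<beta>) \<partial>lborel)
           \<le> ennreal (2 * (r powr (1 - \<beta>) / (\<beta> - 1)))"
proof -
  let ?g = "\<lambda>y::real. ennreal (y powr - \<beta>) * indicator {r..} y"
  have "((\<lambda>y. y powr - \<beta>) has_integral (- (r powr (- \<beta> + 1)) / (- \<beta> + 1))) {r..}"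
    using assms by (intro has_integral_powr_to_inf) auto
  also have "- (r powr (- \<beta> + 1)) / (- \<beta> + 1) = r powr (1 - \<beta>) / (\<beta> - 1)"
    by (simp add: minus_divide_right)
  finally have "(\<integral>\<^sup>+y\<in>{r..}. ennreal (y powr - \<beta>) \<partial>lborel) = ennreal (r powr (1 - \<beta>) / (\<beta> - 1))"
    using assms by (subst nn_integral_has_integral_lebesgue') auto
  moreover have "(\<integral>\<^sup>+y\<in>{0..}. ?g y \<partial>lborel) = (\<integral>\<^sup>+y\<in>{r..}. ennreal (y powr - \<beta>) \<partial>lborel)"
    using assms by (intro nn_integral_cong) (auto split: split_indicator)
  moreover have "(\<integral>\<^sup>+x\<in>{x. r \<le> \<bar>x\<bar>}. ennreal (\<bar>x\<bar> powr - \<beta>) \<partial>lborel)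
      \<le> 2 * (\<integral>\<^sup>+y\<in>{0..}. ?g y \<partial>lborel)"
    using nn_integral_abs_shift_le[of ?g 0] by (simp add: indicator_def)
  moreover have "2 * ennreal (r powr (1 - \<beta>) / (\<beta> - 1)) = ennreal (2 * (r powr (1 - \<beta>) / (\<beta> - 1)))"
    by (metis ennreal_mult' ennreal_numeral zero_le_numeral)
  ultimately show ?thesis
    by simp
qed

lemma nn_integral_powr_neg_half_near_le:
  "(\<integral>\<^sup>+t\<in>{t. \<bar>t - a\<bar> \<le> 3}. ennreal (\<bar>t - a\<bar> powr (-1/2)) \<partial>lborel) \<le> 8"
proof -
  have "(3::real) powr (1/2) \<le> 4 powr (1/2)"
    by (intro powr_mono2) auto
  then have "2 * (3 powr (1 - 1/2) / (1 - 1/2)) \<le> (8::real)"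
    by simp
  then have "ennreal (2 * (3 powr (1 - 1/2) / (1 - 1/2))) \<le> 8"
    by (subst ennreal_numeral[symmetric], rule ennreal_leI)
  with nn_integral_powr_near_le[of "1/2" 3 a] show ?thesis
    by simp
qed

lemma nn_integral_powr_neg_three_halves_tail_le:
  "(\<integral>\<^sup>+t\<in>{t. 2 \<le> \<bar>t\<bar>}. ennreal (\<bar>t\<bar> powr (-3/2)) \<partial>lborel) \<le> 4"
proof -
  have "1 \<le> (2::real) powr (1/2)"
    by (rule ge_one_powr_ge_zero) auto
  then have "2 * (2 powr (1 - 3/2) / (3/2 - 1)) \<le> (4::real)"
    by (simp add: powr_minus_divide divide_le_eq)
  then have "ennreal (2 * (2 powr (1 - 3/2) / (3/2 - 1))) \<le> 4"
    by (subst ennreal_numeral[symmetric], rule ennreal_leI)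
  with nn_integral_powr_tail_le[of "3/2" 2] show ?thesis
    by simp
qed

lemma nn_integral_square_plus_one_powr_le:
  fixes \<beta> :: real
  assumes "1/2 < \<beta>"
  shows "(\<integral>\<^sup>+t. ennreal ((t^2 + 1) powr - \<beta>) \<partial>lborel) \<le> ennreal (2 + 2 / (2 * \<beta> - 1))"
proof -
  have pointwise: "ennreal ((t^2 + 1) powr - \<beta>)
      \<le> indicator {-1..1} t + ennreal (\<bar>t\<bar> powr - (2 * \<beta>)) * indicator {t. 1 \<le> \<bar>t\<bar>} t" for t :: real
  proof (cases "\<bar>t\<bar> \<le> 1")
    case True
    have "(t^2 + 1) powr - \<beta> \<le> 1 powr - \<beta>"
      using assms by (intro powr_mono2') auto
    with True show ?thesis
      by (intro add_increasing2) (auto simp: indicator_def abs_le_iff ennreal_leI)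
  next
    case False
    have "(t^2 + 1) powr - \<beta> \<le> (\<bar>t\<bar> powr 2) powr - \<beta>"
      using assms False by (intro powr_mono2') auto
    also have "\<dots> = \<bar>t\<bar> powr - (2 * \<beta>)"
      by (subst powr_powr) simp
    finally show ?thesis
      using False by (intro add_increasing) (auto simp: ennreal_leI)
  qed
  have "(\<integral>\<^sup>+t. ennreal ((t^2 + 1) powr - \<beta>) \<partial>lborel)
      \<le> (\<integral>\<^sup>+t. indicator {-1..1} t + ennreal (\<bar>t\<bar> powr - (2 * \<beta>)) * indicator {t. 1 \<le> \<bar>t\<bar>} t \<partial>lborel)"
    by (intro nn_integral_mono pointwise)
  also have "\<dots> = 2 + (\<integral>\<^sup>+t\<in>{t. 1 \<le> \<bar>t\<bar>}. ennreal (\<bar>t\<bar> powr - (2 * \<beta>)) \<partial>lborel)"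
    by (subst nn_integral_add) auto
  also have "\<dots> \<le> 2 + ennreal (2 * (1 powr (1 - 2 * \<beta>) / (2 * \<beta> - 1)))"
    using assms by (intro add_left_mono nn_integral_powr_tail_le) auto
  also have "\<dots> = ennreal (2 + 2 / (2 * \<beta> - 1))"
    using assms by (subst ennreal_plus) auto
  finally show ?thesis .
qed

lemma nn_integral_square_plus_powr_le:
  fixes u \<beta> :: real
  assumes "1/2 < \<beta>" "0 < u"
  shows "(\<integral>\<^sup>+t. ennreal ((t^2 + u) powr - \<beta>) \<partial>lborel)
           \<le> ennreal ((2 + 2 / (2 * \<beta> - 1)) * u powr (1/2 - \<beta>))"
proof -
  let ?f = "\<lambda>t. ennreal ((t^2 + u) powr - \<beta>)"
  have scale: "?f (sqrt u * x) = ennreal (u powr - \<beta>) * ennreal ((x^2 + 1) powr - \<beta>)" for x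
  proof -
    have "(sqrt u * x)^2 + u = u * (x^2 + 1)"
      using assms by (simp add: power_mult_distrib algebra_simps)
    then show ?thesis
      using assms by (simp add: powr_mult ennreal_mult)
  qed
  have "(\<integral>\<^sup>+t. ?f t \<partial>lborel) = ennreal (sqrt u) * (\<integral>\<^sup>+x. ?f (0 + sqrt u * x) \<partial>lborel)"
    using assms by (subst nn_integral_real_affine[of _ "sqrt u" 0]) auto
  also have "\<dots> = ennreal (sqrt u * u powr - \<beta>) * (\<integral>\<^sup>+x. ennreal ((x^2 + 1) powr - \<beta>) \<partial>lborel)"
    using assms by (simp add: scale nn_integral_cmult ennreal_mult mult.assoc)
  also have "\<dots> \<le> ennreal (sqrt u * u powr - \<beta>) * ennreal (2 + 2 / (2 * \<beta> - 1))"
    using assms by (intro mult_left_mono nn_integral_square_plus_one_powr_le) auto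
  also have "sqrt u * u powr - \<beta> = u powr (1/2 - \<beta>)"
    using assms by (simp add: powr_half_sqrt[symmetric] powr_add[symmetric])
  finally show ?thesis
    using assms by (simp add: ennreal_mult'' mult.commute)
qed

lemma abs_square_minus_one_powr_le_near:
  fixes w \<alpha> :: real
  assumes "0 \<le> \<alpha>" "0 \<le> w"
  shows "\<bar>w^2 - 1\<bar> powr - \<alpha> \<le> \<bar>w - 1\<bar> powr - \<alpha>"
proof (cases "w = 1")
  case False
  have "\<bar>w - 1\<bar> * 1 \<le> \<bar>w - 1\<bar> * \<bar>w + 1\<bar>"
    using assms by (intro mult_left_mono) auto
  also have "\<dots> = \<bar>w^2 - 1\<bar>"
    by (simp add: abs_mult[symmetric] power2_eq_square algebra_simps)
  finally show ?thesis
    using False assms by (intro powr_mono2') auto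
qed simp

lemma abs_square_minus_one_powr_le_far:
  fixes w \<alpha> :: real
  assumes "0 \<le> \<alpha>" "2 \<le> \<bar>w\<bar>"
  shows "\<bar>w^2 - 1\<bar> powr - \<alpha> \<le> 2 powr \<alpha> * \<bar>w\<bar> powr - (2 * \<alpha>)"
proof -
  have "2^2 \<le> \<bar>w\<bar>^2"
    using assms by (intro power_mono) auto
  then have "\<bar>w^2 - 1\<bar> powr - \<alpha> \<le> (w^2 / 2) powr - \<alpha>"
    using assms by (intro powr_mono2') auto
  also have "\<dots> = 2 powr \<alpha> * \<bar>w\<bar> powr - (2 * \<alpha>)"
    by (simp add: powr_divide powr_powr[symmetric] powr_minus_divide)
  finally show ?thesis .
qed

lemma abs_square_minus_one_powr_le:
  fixes w \<alpha> :: real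
  assumes "0 \<le> \<alpha>"
  shows "\<bar>w^2 - 1\<bar> powr - \<alpha> \<le> \<bar>w - 1\<bar> powr - \<alpha> * indicator {w. \<bar>w - 1\<bar> \<le> 3} w
           + \<bar>w + 1\<bar> powr - \<alpha> * indicator {w. \<bar>w + 1\<bar> \<le> 3} w
           + 2 powr \<alpha> * (\<bar>w\<bar> powr - (2 * \<alpha>) * indicator {w. 2 \<le> \<bar>w\<bar>} w)"
proof -
  consider "2 \<le> \<bar>w\<bar>" | "\<bar>w\<bar> < 2" "0 \<le> w" | "\<bar>w\<bar> < 2" "w < 0"
    by linarith
  then show ?thesis
  proof cases
    case 1
    then show ?thesis
      using abs_square_minus_one_powr_le_far[OF assms 1] by (simp add: indicator_def add_increasing)
  next
    case 2
    then show ?thesis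
      using abs_square_minus_one_powr_le_near[OF assms 2(2)] by (simp add: indicator_def add_increasing2)
  next
    case 3
    moreover have "\<bar>- w - 1\<bar> = \<bar>w + 1\<bar>"
      by arith
    ultimately show ?thesis
      using abs_square_minus_one_powr_le_near[OF assms, of "- w"]
      by (simp add: indicator_def add_increasing add_increasing2)
  qed
qed

lemma nn_integral_abs_square_minus_one_powr_finite:
  fixes \<alpha> :: real
  assumes \<alpha>: "1/2 < \<alpha>" "\<alpha> < 1"
  shows "(\<integral>\<^sup>+w. ennreal (\<bar>w^2 - 1\<bar> powr - \<alpha>) \<partial>lborel) < \<infinity>"
proof -
  define near where "near a w = ennreal (\<bar>w - a\<bar> powr - \<alpha>) * indicator {w. \<bar>w - a\<bar> \<le> 3} w"
    for a w :: real
  define far where "far w = ennreal (\<bar>w\<bar> powr - (2 * \<alpha>)) * indicator {w. 2 \<le> \<bar>w\<bar>} w" for w :: real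
  have "(\<integral>\<^sup>+w. ennreal (\<bar>w^2 - 1\<bar> powr - \<alpha>) \<partial>lborel)
      \<le> (\<integral>\<^sup>+w. near 1 w + near (- 1) w + ennreal (2 powr \<alpha>) * far w \<partial>lborel)"
  proof (intro nn_integral_mono)
    fix w :: real
    show "ennreal (\<bar>w^2 - 1\<bar> powr - \<alpha>) \<le> near 1 w + near (- 1) w + ennreal (2 powr \<alpha>) * far w"
      using ennreal_leI[OF abs_square_minus_one_powr_le[of \<alpha> w]] \<alpha>
      by (simp add: near_def far_def ennreal_plus ennreal_mult ennreal_indicator split: split_indicator)
  qed
  also have "\<dots> = (\<integral>\<^sup>+w. near 1 w \<partial>lborel) + (\<integral>\<^sup>+w. near (- 1) w \<partial>lborel)
      + ennreal (2 powr \<alpha>) * (\<integral>\<^sup>+w. far w \<partial>lborel)"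
    by (simp add: near_def far_def nn_integral_add nn_integral_cmult)
  also have "\<dots> < \<infinity>"
  proof -
    have "(\<integral>\<^sup>+w. near a w \<partial>lborel) < \<infinity>" for a
      using nn_integral_powr_near_le[of \<alpha> 3 a] \<alpha> unfolding near_def
      by (simp add: le_less_trans)
    moreover have "(\<integral>\<^sup>+w. far w \<partial>lborel) < \<infinity>"
      using nn_integral_powr_tail_le[of "2 * \<alpha>" 2] \<alpha> unfolding far_def
      by (simp add: le_less_trans)
    ultimately show ?thesis
      by (simp add: ennreal_mult_less_top)
  qed
  finally show ?thesis .
qed

section \<open>Fubini and rotation invariance on the plane\<close>

lemma nn_integral_lborel_pair_snd:
  fixes F :: "real \<times> real \<Rightarrow> ennreal"
  assumes "F \<in> borel_measurable (borel \<Otimes>\<^sub>M borel)"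
  shows "(\<integral>\<^sup>+p. F p \<partial>lborel) = (\<integral>\<^sup>+y. (\<integral>\<^sup>+x. F (x, y) \<partial>lborel) \<partial>lborel)"
  using assms by (subst lborel_pair.nn_integral_snd) (simp_all add: lborel_prod borel_prod)

lemma nn_integral_lborel_pair_fst:
  fixes F :: "real \<times> real \<Rightarrow> ennreal"
  assumes "F \<in> borel_measurable (borel \<Otimes>\<^sub>M borel)"
  shows "(\<integral>\<^sup>+p. F p \<partial>lborel) = (\<integral>\<^sup>+x. (\<integral>\<^sup>+y. F (x, y) \<partial>lborel) \<partial>lborel)"
  using assms by (subst lborel.nn_integral_fst) (simp_all add: lborel_prod borel_prod)

lemma nn_integral_lborel_shear_fst:
  fixes F :: "real \<times> real \<Rightarrow> ennreal" and g :: "real \<Rightarrow> real"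
  assumes [measurable]: "F \<in> borel_measurable (borel \<Otimes>\<^sub>M borel)" "g \<in> borel_measurable borel"
    and c: "c \<noteq> 0"
  shows "(\<integral>\<^sup>+p. F (c * fst p + g (snd p), snd p) \<partial>lborel) = ennreal (1 / \<bar>c\<bar>) * (\<integral>\<^sup>+p. F p \<partial>lborel)"
proof -
  have inner: "(\<integral>\<^sup>+x. F (c * x + g y, y) \<partial>lborel) = ennreal (1 / \<bar>c\<bar>) * (\<integral>\<^sup>+x. F (x, y) \<partial>lborel)" for y
    using nn_integral_real_affine[of "\<lambda>x. F (x, y)" c "g y"] c
    by (simp add: add.commute ennreal_mult'[symmetric] mult.assoc[symmetric] flip: divide_inverse)
  have "(\<integral>\<^sup>+p. F (c * fst p + g (snd p), snd p) \<partial>lborel)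
      = (\<integral>\<^sup>+y. ennreal (1 / \<bar>c\<bar>) * (\<integral>\<^sup>+x. F (x, y) \<partial>lborel) \<partial>lborel)"
    by (subst nn_integral_lborel_pair_snd) (simp_all add: inner)
  also have "\<dots> = ennreal (1 / \<bar>c\<bar>) * (\<integral>\<^sup>+p. F p \<partial>lborel)"
    by (subst nn_integral_cmult) (simp_all add: nn_integral_lborel_pair_snd)
  finally show ?thesis .
qed

lemma nn_integral_lborel_shear_snd:
  fixes F :: "real \<times> real \<Rightarrow> ennreal" and g :: "real \<Rightarrow> real"
  assumes [measurable]: "F \<in> borel_measurable (borel \<Otimes>\<^sub>M borel)" "g \<in> borel_measurable borel"
    and c: "c \<noteq> 0"
  shows "(\<integral>\<^sup>+p. F (fst p, c * snd p + g (fst p)) \<partial>lborel) = ennreal (1 / \<bar>c\<bar>) * (\<integral>\<^sup>+p. F p \<partial>lborel)"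
proof -
  have inner: "(\<integral>\<^sup>+y. F (x, c * y + g x) \<partial>lborel) = ennreal (1 / \<bar>c\<bar>) * (\<integral>\<^sup>+y. F (x, y) \<partial>lborel)" for x
    using nn_integral_real_affine[of "\<lambda>y. F (x, y)" c "g x"] c
    by (simp add: add.commute ennreal_mult'[symmetric] mult.assoc[symmetric] flip: divide_inverse)
  have "(\<integral>\<^sup>+p. F (fst p, c * snd p + g (fst p)) \<partial>lborel)
      = (\<integral>\<^sup>+x. ennreal (1 / \<bar>c\<bar>) * (\<integral>\<^sup>+y. F (x, y) \<partial>lborel) \<partial>lborel)"
    by (subst nn_integral_lborel_pair_fst) (simp_all add: inner)
  also have "\<dots> = ennreal (1 / \<bar>c\<bar>) * (\<integral>\<^sup>+p. F p \<partial>lborel)"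
    by (subst nn_integral_cmult) (simp_all add: nn_integral_lborel_pair_fst)
  finally show ?thesis .
qed

text \<open>For \<open>e1 \<noteq> 0\<close> the rotation is the shear (a, b) \<mapsto> (e1 a + e2 b, b) followed by the
  shear (x, b) \<mapsto> (x, (b - e2 x) / e1).\<close>

lemma nn_integral_lborel_rotation_nondegenerate:
  fixes Q :: "real \<times> real \<Rightarrow> ennreal"
  assumes [measurable]: "Q \<in> borel_measurable (borel \<Otimes>\<^sub>M borel)"
    and e: "e1^2 + e2^2 = 1" and e1: "e1 \<noteq> 0"
  shows "(\<integral>\<^sup>+p. Q (e1 * fst p + e2 * snd p, - e2 * fst p + e1 * snd p) \<partial>lborel) = (\<integral>\<^sup>+p. Q p \<partial>lborel)"
proof -
  define G where "G p = Q (fst p, (snd p - e2 * fst p) / e1)" for p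
  have [measurable]: "G \<in> borel_measurable (borel \<Otimes>\<^sub>M borel)"
    unfolding G_def by measurable
  have "snd p - e2 * (e1 * fst p + e2 * snd p) = (- e2 * fst p + e1 * snd p) * e1" for p :: "real \<times> real"
    using e by algebra
  then have "(snd p - e2 * (e1 * fst p + e2 * snd p)) / e1 = - e2 * fst p + e1 * snd p" for p :: "real \<times> real"
    using e1 by (simp add: nonzero_divide_eq_eq)
  then have "(\<integral>\<^sup>+p. Q (e1 * fst p + e2 * snd p, - e2 * fst p + e1 * snd p) \<partial>lborel)
      = (\<integral>\<^sup>+p. G (e1 * fst p + e2 * snd p, snd p) \<partial>lborel)"
    by (simp add: G_def)
  also have "\<dots> = ennreal (1 / \<bar>e1\<bar>) * (\<integral>\<^sup>+p. G p \<partial>lborel)"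
    using e1 by (intro nn_integral_lborel_shear_fst) auto
  also have "(\<integral>\<^sup>+p. G p \<partial>lborel) = (\<integral>\<^sup>+p. Q (fst p, (1 / e1) * snd p + (- e2 / e1) * fst p) \<partial>lborel)"
    by (simp add: G_def diff_divide_distrib)
  also have "\<dots> = ennreal \<bar>e1\<bar> * (\<integral>\<^sup>+p. Q p \<partial>lborel)"
    using e1 nn_integral_lborel_shear_snd[of Q "\<lambda>x. - e2 / e1 * x" "1 / e1"] by simp
  finally show ?thesis
    using e1 by (simp add: mult.assoc[symmetric] ennreal_mult[symmetric])
qed

lemma nn_integral_lborel_rotation:
  fixes Q :: "real \<times> real \<Rightarrow> ennreal"
  assumes Q[measurable]: "Q \<in> borel_measurable (borel \<Otimes>\<^sub>M borel)" and e: "e1^2 + e2^2 = 1"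
  shows "(\<integral>\<^sup>+p. Q (e1 * fst p + e2 * snd p, - e2 * fst p + e1 * snd p) \<partial>lborel) = (\<integral>\<^sup>+p. Q p \<partial>lborel)"
proof (cases "e1 = 0")
  case False
  with Q e show ?thesis
    by (rule nn_integral_lborel_rotation_nondegenerate)
next
  case True
  \<comment> \<open>A quarter turn is the square of an eighth turn, which is nondegenerate.\<close>
  define c d where "c = 1 / sqrt 2" and "d = e2 / sqrt 2"
  have cd: "c^2 + d^2 = 1" "c \<noteq> 0"
    using e True by (auto simp: c_def d_def power_divide)
  define R where "R p = (c * fst p + d * snd p, - d * fst p + c * snd p)" for p :: "real \<times> real"
  have QR: "(\<lambda>p. Q (R p)) \<in> borel_measurable (borel \<Otimes>\<^sub>M borel)"
    unfolding R_def by measurable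
  have "c * c - d * d = e1" "2 * c * d = e2"
    using e True by (auto simp: c_def d_def power2_eq_square)
  then have "R (R p) = (e1 * fst p + e2 * snd p, - e2 * fst p + e1 * snd p)" for p
    by (simp add: R_def algebra_simps) (simp add: algebra_simps flip: \<open>c * c - d * d = e1\<close> \<open>2 * c * d = e2\<close>)
  then have "(\<integral>\<^sup>+p. Q (e1 * fst p + e2 * snd p, - e2 * fst p + e1 * snd p) \<partial>lborel)
      = (\<integral>\<^sup>+p. (\<lambda>p. Q (R p)) (c * fst p + d * snd p, - d * fst p + c * snd p) \<partial>lborel)"
    by (simp add: R_def)
  also have "\<dots> = (\<integral>\<^sup>+p. Q (R p) \<partial>lborel)"
    using cd QR by (intro nn_integral_lborel_rotation_nondegenerate) auto
  also have "\<dots> = (\<integral>\<^sup>+p. Q p \<partial>lborel)"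
    using cd Q unfolding R_def by (intro nn_integral_lborel_rotation_nondegenerate) auto
  finally show ?thesis .
qed

section \<open>An integrable kernel on the plane\<close>

text \<open>\<open>kernel t w\<close> is the density, with respect to \<open>dt dw\<close>, of |x0 - x1|^{-1/2} |x'|^{-1} d\<sigma>(x) summed
  over the two sheets x0 = \<plusminus>sqrt(t^2 + w^2 - 1) of X, in the coordinates (x1, x2) = (t, w).\<close>

definition kernel :: "real \<Rightarrow> real \<Rightarrow> real" where
  "kernel t w = (if 1 < t^2 + w^2 then
     (\<bar>sqrt (t^2 + w^2 - 1) - t\<bar> powr (-1/2) + \<bar>sqrt (t^2 + w^2 - 1) + t\<bar> powr (-1/2))
       / (2 * sqrt (t^2 + w^2 - 1) * sqrt (t^2 + w^2)) else 0)"

lemma kernel_measurable [measurable (raw)]: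
  assumes [measurable]: "f \<in> borel_measurable M" "g \<in> borel_measurable M"
  shows "(\<lambda>x. kernel (f x) (g x)) \<in> borel_measurable M"
  unfolding kernel_def by measurable

lemma powr_neg_half_le_of_mult_eq:
  fixes a b d r :: real
  assumes "a * b = d" "0 < a" "0 < b" "b \<le> r"
  shows "a powr (-1/2) \<le> r powr (1/2) * d powr (-1/2)"
proof -
  have "a powr (-1/2) = b powr (1/2) * d powr (-1/2)"
    using assms by (simp add: powr_mult powr_add[symmetric] flip: assms(1))
  also have "\<dots> \<le> r powr (1/2) * d powr (-1/2)"
    using assms by (intro mult_right_mono powr_mono2) auto
  finally show ?thesis .
qed

text \<open>With h = sqrt(t^2 + w^2 - 1) we have (h - t)(h + t) = w^2 - 1, so each singular factor
  |h \<mp> t|^{-1/2} equals |h \<plusminus> t|^{1/2} |w^2 - 1|^{-1/2}, where |h \<plusminus> t| \<le> 2 sqrt(t^2 + w^2).\<close>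

lemma kernel_le:
  fixes t w :: real
  assumes S: "1 < t^2 + w^2" and w: "w^2 \<noteq> 1"
  shows "kernel t w \<le> sqrt 2 * \<bar>w^2 - 1\<bar> powr (-1/2) * (t^2 + w^2 - 1) powr (-1/2) * (t^2 + w^2) powr (-1/4)"
proof -
  define h where "h = (t^2 + w^2 - 1) powr (1/2)"
  define q where "q = (t^2 + w^2) powr (1/4)"
  define d where "d = \<bar>w^2 - 1\<bar>"
  have h_sqrt: "h = sqrt (t^2 + w^2 - 1)"
    using S by (simp add: h_def powr_half_sqrt)
  have "q^2 = (t^2 + w^2) powr (1/2)"
    unfolding q_def using S by (subst powr_power) auto
  then have q_sqrt: "q^2 = sqrt (t^2 + w^2)"
    by (simp add: powr_half_sqrt)
  have hq: "0 < h" "0 < q" "h \<le> q^2"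
    using S by (auto simp: h_sqrt q_sqrt) (auto simp: q_def)
  have "\<bar>t\<bar> \<le> q^2"
    unfolding q_sqrt by (metis real_sqrt_abs real_sqrt_le_mono le_add_same_cancel1 zero_le_power2)
  then have bounds: "\<bar>h - t\<bar> \<le> 2 * q^2" "\<bar>h + t\<bar> \<le> 2 * q^2"
    using hq by linarith+
  have "(h - t) * (h + t) = w^2 - 1"
    using S by (simp add: h_sqrt algebra_simps power2_eq_square[symmetric])
  then have prod: "\<bar>h - t\<bar> * \<bar>h + t\<bar> = d" "\<bar>h + t\<bar> * \<bar>h - t\<bar> = d"
    by (simp_all add: d_def abs_mult[symmetric] mult.commute)
  with w have pos: "0 < \<bar>h - t\<bar>" "0 < \<bar>h + t\<bar>"
    by (auto simp: d_def)
  have "kernel t w = (\<bar>h - t\<bar> powr (-1/2) + \<bar>h + t\<bar> powr (-1/2)) / (2 * h * q^2)"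
    using S by (simp add: kernel_def h_sqrt q_sqrt)
  also have "\<dots> \<le> (2 * ((2 * q^2) powr (1/2) * d powr (-1/2))) / (2 * h * q^2)"
  proof -
    have "\<bar>h - t\<bar> powr (-1/2) \<le> (2 * q^2) powr (1/2) * d powr (-1/2)"
         "\<bar>h + t\<bar> powr (-1/2) \<le> (2 * q^2) powr (1/2) * d powr (-1/2)"
      using powr_neg_half_le_of_mult_eq[OF prod(1) pos bounds(2)]
        powr_neg_half_le_of_mult_eq[OF prod(2) pos(2,1) bounds(1)] by auto
    then show ?thesis
      using hq by (intro divide_right_mono) auto
  qed
  also have "(2 * q^2) powr (1/2) = sqrt 2 * q"
    using hq by (simp add: powr_half_sqrt real_sqrt_mult)
  also have "(2 * (sqrt 2 * q * d powr (-1/2))) / (2 * h * q^2) = sqrt 2 * d powr (-1/2) * h powr (-1) * q powr (-1)"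
    using hq by (simp add: powr_minus_divide power2_eq_square field_simps)
  also have "h powr (-1) = (t^2 + w^2 - 1) powr (-1/2)"
    by (simp add: h_def powr_powr powr_minus_divide)
  also have "q powr (-1) = (t^2 + w^2) powr (-1/4)"
    by (simp add: q_def powr_powr powr_minus_divide)
  finally show ?thesis
    by (simp add: d_def)
qed

lemma kernel_le_of_bounds:
  fixes t w H R :: real
  assumes "1 < t^2 + w^2" "w^2 \<noteq> 1"
    and H: "(t^2 + w^2 - 1) powr (-1/2) \<le> H" and R: "(t^2 + w^2) powr (-1/4) \<le> R"
  shows "kernel t w \<le> sqrt 2 * \<bar>w^2 - 1\<bar> powr (-1/2) * H * R"
proof -
  have "0 \<le> H"
    using H powr_ge_zero order_trans by blast
  then have "sqrt 2 * \<bar>w^2 - 1\<bar> powr (-1/2) * (t^2 + w^2 - 1) powr (-1/2) * (t^2 + w^2) powr (-1/4)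
      \<le> sqrt 2 * \<bar>w^2 - 1\<bar> powr (-1/2) * H * R"
    using H R by (intro mult_mono mult_left_mono) auto
  with kernel_le[OF assms(1,2)] show ?thesis
    by linarith
qed

lemma kernel_le_large_w:
  fixes t w :: real
  assumes w: "1 < w^2"
  shows "kernel t w \<le> sqrt 2 * (w^2 - 1) powr (-1/2) * (t^2 + (w^2 - 1)) powr (-3/4)"
proof -
  have S: "1 < t^2 + w^2"
    using w zero_le_power2[of t] by linarith
  have "(t^2 + w^2) powr (-1/4) \<le> (t^2 + w^2 - 1) powr (-1/4)"
    using S by (intro powr_mono2') auto
  then have "kernel t w \<le> sqrt 2 * (w^2 - 1) powr (-1/2) * (t^2 + w^2 - 1) powr (-1/2) * (t^2 + w^2 - 1) powr (-1/4)"
    using kernel_le_of_bounds[OF S] w by simp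
  also have "\<dots> = sqrt 2 * (w^2 - 1) powr (-1/2) * (t^2 + (w^2 - 1)) powr (-3/4)"
    by (simp add: mult.assoc powr_add[symmetric] algebra_simps)
  finally show ?thesis .
qed

lemma kernel_le_small_w_far:
  fixes t w :: real
  assumes w: "w^2 < 1" and t: "2 \<le> \<bar>t\<bar>"
  shows "kernel t w \<le> 2 * (1 - w^2) powr (-1/2) * \<bar>t\<bar> powr (-3/2)"
proof -
  have "2^2 \<le> \<bar>t\<bar>^2"
    using t by (intro power_mono) auto
  then have t2: "4 \<le> t^2"
    by simp
  have S: "1 < t^2 + w^2"
    using t2 zero_le_power2[of w] by linarith
  have "(t^2 + w^2 - 1) powr (-1/2) \<le> (t^2 / 2) powr (-1/2)"
  proof (rule powr_mono2')
    show "t^2 / 2 \<le> t^2 + w^2 - 1"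
      using t2 zero_le_power2[of w] by linarith
  qed (use t2 in auto)
  also have "\<dots> = sqrt 2 * \<bar>t\<bar> powr (-1)"
    by (simp add: powr_divide powr_powr[symmetric] powr_half_sqrt powr_minus_divide)
  finally have h: "(t^2 + w^2 - 1) powr (-1/2) \<le> sqrt 2 * \<bar>t\<bar> powr (-1)" .
  have "(t^2 + w^2) powr (-1/4) \<le> (t^2) powr (-1/4)"
    using t2 by (intro powr_mono2') auto
  also have "\<dots> = (\<bar>t\<bar> powr 2) powr (-1/4)"
    using t by simp
  also have "\<dots> = \<bar>t\<bar> powr (-1/2)"
    by (subst powr_powr) simp
  finally have r: "(t^2 + w^2) powr (-1/4) \<le> \<bar>t\<bar> powr (-1/2)" .
  have "kernel t w \<le> sqrt 2 * (1 - w^2) powr (-1/2) * (sqrt 2 * \<bar>t\<bar> powr (-1)) * \<bar>t\<bar> powr (-1/2)"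
    using kernel_le_of_bounds[OF S _ h r] w by simp
  also have "\<dots> = (sqrt 2 * sqrt 2) * (1 - w^2) powr (-1/2) * (\<bar>t\<bar> powr (-1) * \<bar>t\<bar> powr (-1/2))"
    by (simp only: ac_simps)
  also have "\<dots> = 2 * (1 - w^2) powr (-1/2) * \<bar>t\<bar> powr (-3/2)"
    by (subst powr_add[symmetric]) simp
  finally show ?thesis .
qed

lemma powr_neg_half_square_diff_le:
  fixes s t :: real
  assumes "0 < s" "s < \<bar>t\<bar>"
  shows "(t^2 - s^2) powr (-1/2) \<le> (2 * s) powr (-1/2) * (\<bar>t\<bar> - s) powr (-1/2)"
proof -
  have "(\<bar>t\<bar> - s) * (2 * s) \<le> (\<bar>t\<bar> - s) * (\<bar>t\<bar> + s)"
    using assms by (intro mult_left_mono) auto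
  also have "\<dots> = \<bar>t\<bar> * \<bar>t\<bar> - s * s"
    by (simp add: algebra_simps)
  also have "\<dots> = t^2 - s^2"
    by (simp add: power2_eq_square)
  finally have "(t^2 - s^2) powr (-1/2) \<le> ((\<bar>t\<bar> - s) * (2 * s)) powr (-1/2)"
    using assms by (intro powr_mono2') auto
  also have "\<dots> = (2 * s) powr (-1/2) * (\<bar>t\<bar> - s) powr (-1/2)"
    using assms by (simp add: powr_mult)
  finally show ?thesis .
qed

lemma kernel_le_small_w_near:
  fixes t w :: real
  assumes w: "w^2 < 1"
  defines "s \<equiv> sqrt (1 - w^2)"
  shows "kernel t w \<le> (1 - w^2) powr (-3/4) * (\<bar>t - s\<bar> powr (-1/2) + \<bar>t + s\<bar> powr (-1/2))"
proof (cases "1 < t^2 + w^2")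
  case False
  then show ?thesis
    by (simp add: kernel_def)
next
  case S: True
  define v where "v = 1 - w^2"
  have v: "0 < v" "s^2 = v" "s = v powr (1/2)"
    using w by (simp_all add: v_def s_def powr_half_sqrt)
  have "sqrt (1 - w^2) < sqrt (t^2)"
    using S by (intro real_sqrt_less_mono) simp
  then have s: "0 < s" "s < \<bar>t\<bar>"
    using w by (simp_all add: s_def)
  have "t^2 + w^2 - 1 = t^2 - s^2"
    using v(2) by (simp add: v_def)
  then have h: "(t^2 + w^2 - 1) powr (-1/2) \<le> (2 * s) powr (-1/2) * (\<bar>t\<bar> - s) powr (-1/2)"
    using powr_neg_half_square_diff_le[OF s] by (simp only:)
  have "(t^2 + w^2) powr (-1/4) \<le> 1 powr (-1/4)"
    using S by (intro powr_mono2') auto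
  then have r: "(t^2 + w^2) powr (-1/4) \<le> 1"
    by simp
  have "kernel t w \<le> sqrt 2 * v powr (-1/2) * ((2 * s) powr (-1/2) * (\<bar>t\<bar> - s) powr (-1/2)) * 1"
    using kernel_le_of_bounds[OF S _ h r] w by (simp add: v_def)
  also have "\<dots> = (sqrt 2 * 2 powr (-1/2)) * (v powr (-1/2) * v powr (-1/4)) * (\<bar>t\<bar> - s) powr (-1/2)"
    using s by (simp add: powr_mult v(3) powr_powr)
  also have "sqrt 2 * 2 powr (-1/2) = 1"
    by (subst powr_half_sqrt[symmetric]) (simp_all flip: powr_add)
  also have "v powr (-1/2) * v powr (-1/4) = v powr (-3/4)"
    by (subst powr_add[symmetric]) simp
  also have "(\<bar>t\<bar> - s) powr (-1/2) \<le> \<bar>t - s\<bar> powr (-1/2) + \<bar>t + s\<bar> powr (-1/2)"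
  proof (cases "0 \<le> t")
    case True
    with s have "\<bar>t\<bar> - s = \<bar>t - s\<bar>" by simp
    then show ?thesis by simp
  next
    case False
    with s have "\<bar>t\<bar> - s = \<bar>t + s\<bar>" by simp
    then show ?thesis by simp
  qed
  finally show ?thesis
    using v by (simp add: v_def mult_left_mono)
qed

lemma kernel_le_small_w:
  fixes t w :: real
  assumes w: "w^2 < 1"
  defines "s \<equiv> sqrt (1 - w^2)"
  shows "kernel t w \<le> 2 * (1 - w^2) powr (-1/2) * (\<bar>t\<bar> powr (-3/2) * indicator {t. 2 \<le> \<bar>t\<bar>} t)
           + (1 - w^2) powr (-3/4) * (\<bar>t - s\<bar> powr (-1/2) * indicator {t. \<bar>t - s\<bar> \<le> 3} t
                                     + \<bar>t + s\<bar> powr (-1/2) * indicator {t. \<bar>t + s\<bar> \<le> 3} t)"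
proof (cases "2 \<le> \<bar>t\<bar>")
  case True
  then show ?thesis
    using kernel_le_small_w_far[OF w True] by (simp add: add_increasing2 indicator_def)
next
  case False
  moreover have "0 \<le> s" "s \<le> 1"
    using w by (simp_all add: s_def)
  ultimately have "\<bar>t - s\<bar> \<le> 3" "\<bar>t + s\<bar> \<le> 3"
    by auto
  then show ?thesis
    using kernel_le_small_w_near[OF w, of t] False by (simp add: s_def)
qed

lemma nn_integral_kernel_large_w:
  fixes w :: real
  assumes w: "1 < w^2"
  shows "(\<integral>\<^sup>+t. ennreal (kernel t w) \<partial>lborel) \<le> ennreal (24 * (w^2 - 1) powr (-3/4))"
proof -
  define u where "u = w^2 - 1"
  have u: "0 < u" using w by (simp add: u_def)
  have "(\<integral>\<^sup>+t. ennreal (kernel t w) \<partial>lborel)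
      \<le> (\<integral>\<^sup>+t. ennreal (sqrt 2 * u powr (-1/2)) * ennreal ((t^2 + u) powr (-3/4)) \<partial>lborel)"
    using kernel_le_large_w[OF w] by (intro nn_integral_mono) (simp add: u_def ennreal_leI flip: ennreal_mult')
  also have "\<dots> = ennreal (sqrt 2 * u powr (-1/2)) * (\<integral>\<^sup>+t. ennreal ((t^2 + u) powr (-3/4)) \<partial>lborel)"
    by (rule nn_integral_cmult) measurable
  also have "\<dots> \<le> ennreal (sqrt 2 * u powr (-1/2)) * ennreal (6 * u powr (-1/4))"
    using nn_integral_square_plus_powr_le[of "3/4" u] u by (intro mult_left_mono) auto
  also have "\<dots> = ennreal (6 * sqrt 2 * u powr (-3/4))"
    by (simp add: ennreal_mult'[symmetric] mult.assoc mult.left_commute powr_add[symmetric])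
  also have "\<dots> \<le> ennreal (24 * u powr (-3/4))"
  proof (intro ennreal_leI mult_right_mono)
    have "sqrt 2 \<le> 2" by (rule real_le_lsqrt) auto
    then show "6 * sqrt 2 \<le> 24" by simp
  qed simp
  finally show ?thesis by (simp add: u_def)
qed

lemma nn_integral_kernel_small_w:
  fixes w :: real
  assumes w: "w^2 < 1"
  shows "(\<integral>\<^sup>+t. ennreal (kernel t w) \<partial>lborel) \<le> ennreal (24 * (1 - w^2) powr (-3/4))"
proof -
  define v where "v = 1 - w^2"
  define s where "s = sqrt v"
  have v: "0 < v" "v \<le> 1"
    using w by (auto simp: v_def)
  define far where "far t = ennreal (\<bar>t\<bar> powr (-3/2)) * indicator {t. 2 \<le> \<bar>t\<bar>} t" for t :: real
  define near where "near a t = ennreal (\<bar>t - a\<bar> powr (-1/2)) * indicator {t. \<bar>t - a\<bar> \<le> 3} t"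
    for a t :: real
  have near_le: "(\<integral>\<^sup>+t. near a t \<partial>lborel) \<le> 8" for a
    using nn_integral_powr_neg_half_near_le unfolding near_def by simp
  have far_le: "(\<integral>\<^sup>+t. far t \<partial>lborel) \<le> 4"
    using nn_integral_powr_neg_three_halves_tail_le unfolding far_def by simp
  have "(\<integral>\<^sup>+t. ennreal (kernel t w) \<partial>lborel)
      \<le> (\<integral>\<^sup>+t. ennreal (2 * v powr (-1/2)) * far t + ennreal (v powr (-3/4)) * (near s t + near (- s) t) \<partial>lborel)"
  proof (intro nn_integral_mono)
    fix t
    have "ennreal (kernel t w) \<le> ennreal (2 * v powr (-1/2) * (\<bar>t\<bar> powr (-3/2) * indicator {t. 2 \<le> \<bar>t\<bar>} t)
        + v powr (-3/4) * (\<bar>t - s\<bar> powr (-1/2) * indicator {t. \<bar>t - s\<bar> \<le> 3} t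
                          + \<bar>t + s\<bar> powr (-1/2) * indicator {t. \<bar>t + s\<bar> \<le> 3} t))"
      using kernel_le_small_w[OF w, of t] unfolding v_def s_def by (rule ennreal_leI)
    then show "ennreal (kernel t w) \<le> ennreal (2 * v powr (-1/2)) * far t + ennreal (v powr (-3/4)) * (near s t + near (- s) t)"
      by (simp add: far_def near_def ennreal_plus ennreal_mult ennreal_indicator split: split_indicator)
  qed
  also have "\<dots> = ennreal (2 * v powr (-1/2)) * (\<integral>\<^sup>+t. far t \<partial>lborel)
      + ennreal (v powr (-3/4)) * ((\<integral>\<^sup>+t. near s t \<partial>lborel) + (\<integral>\<^sup>+t. near (- s) t \<partial>lborel))"
    by (simp add: far_def near_def nn_integral_add nn_integral_cmult)
  also have "\<dots> \<le> ennreal (2 * v powr (-1/2)) * 4 + ennreal (v powr (-3/4)) * (8 + 8)"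
    by (intro add_mono mult_left_mono far_le near_le) auto
  also have "\<dots> = ennreal (8 * v powr (-1/2) + 16 * v powr (-3/4))"
    by (simp add: ennreal_mult' ennreal_plus[symmetric] mult_ac)
  also have "\<dots> \<le> ennreal (24 * v powr (-3/4))"
    using powr_mono'[of "-3/4" "-1/2" v] v by (intro ennreal_leI) auto
  finally show ?thesis
    by (simp add: v_def)
qed

lemma nn_integral_kernel_le:
  fixes w :: real
  assumes "w^2 \<noteq> 1"
  shows "(\<integral>\<^sup>+t. ennreal (kernel t w) \<partial>lborel) \<le> ennreal (24 * \<bar>w^2 - 1\<bar> powr (-3/4))"
proof (cases "1 < w^2")
  case True
  then show ?thesis
    using nn_integral_kernel_large_w by simp
next
  case False
  with assms have "w^2 < 1"
    by simp
  then show ?thesis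
    using nn_integral_kernel_small_w by simp
qed

lemma nn_integral_kernel_finite: "(\<integral>\<^sup>+p. ennreal (kernel (fst p) (snd p)) \<partial>lborel) < \<infinity>"
proof -
  have "(\<integral>\<^sup>+p. ennreal (kernel (fst p) (snd p)) \<partial>lborel) = (\<integral>\<^sup>+w. (\<integral>\<^sup>+t. ennreal (kernel t w) \<partial>lborel) \<partial>lborel)"
    by (subst nn_integral_lborel_pair_snd) auto
  also have "\<dots> \<le> (\<integral>\<^sup>+w. ennreal (24 * \<bar>w^2 - 1\<bar> powr (-3/4)) \<partial>lborel)"
  proof (intro nn_integral_mono_AE)
    have "AE w in lborel. w \<notin> {1, -1}"
      by (intro AE_not_in countable_imp_null_set_lborel) auto
    then show "AE w in lborel. (\<integral>\<^sup>+t. ennreal (kernel t w) \<partial>lborel) \<le> ennreal (24 * \<bar>w^2 - 1\<bar> powr (-3/4))"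
    proof eventually_elim
      case (elim w)
      then have "w^2 \<noteq> 1"
        by (auto simp: power2_eq_1_iff)
      then show ?case
        by (rule nn_integral_kernel_le)
    qed
  qed
  also have "\<dots> = ennreal 24 * (\<integral>\<^sup>+w. ennreal (\<bar>w^2 - 1\<bar> powr (-3/4)) \<partial>lborel)"
    by (simp add: ennreal_mult' nn_integral_cmult)
  also have "\<dots> < \<infinity>"
    using nn_integral_abs_square_minus_one_powr_finite[of "3/4"] by (simp add: ennreal_mult_less_top)
  finally show ?thesis .
qed

section \<open>Pointwise bounds on the integrand\<close>

definition zpar_decay :: "(pt3 \<Rightarrow> complex) \<Rightarrow> real \<Rightarrow> bool" where
  "zpar_decay f c \<longleftrightarrow> (\<forall>l m. l \<noteq> m \<longrightarrow>
     cmod (f (zpar l m)) / \<bar>l - m\<bar> \<le> c / ((1 + \<bar>l\<bar>) * (1 + \<bar>m\<bar>)))"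

lemma Hreg_imp_zpar_decay: "f \<in> Hreg \<Longrightarrow> \<exists>c. zpar_decay f c"
  unfolding Hreg_def zpar_decay_def by blast

lemma zpar_decay_nonneg:
  assumes "zpar_decay f c"
  shows "0 \<le> c"
proof -
  have "cmod (f (zpar 1 0)) \<le> c / 2"
    using assms[unfolded zpar_decay_def, rule_format, of 1 0] by simp
  then show ?thesis
    using norm_ge_zero[of "f (zpar 1 0)"] by linarith
qed

lemma zpar_spatial_norm:
  assumes "l \<noteq> m"
  shows "(fst (snd (zpar l m)))^2 + (snd (snd (zpar l m)))^2 = (1 + l^2) * (1 + m^2) / (l - m)^2"
proof -
  have "(1 - l * m)^2 + (l + m)^2 = (1 + l^2) * (1 + m^2)"
    by (simp add: power2_eq_square algebra_simps)
  then show ?thesis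
    by (simp add: zpar_def power_divide add_divide_distrib[symmetric])
qed

text \<open>By the definition of \<open>zpar\<close>, \<open>(x0 + x1, x2 + 1, x2 - 1) = (2, 2 l, 2 m) / (l - m)\<close>.\<close>

lemma zpar_inverse:
  fixes x0 x1 x2 :: real
  assumes X: "x0^2 = x1^2 + x2^2 - 1" and s: "x0 + x1 \<noteq> 0"
  defines "l \<equiv> (x2 + 1) / (x0 + x1)" and "m \<equiv> (x2 - 1) / (x0 + x1)"
  shows "l \<noteq> m" "zpar l m = (x0, x1, x2)"
proof -
  have lm: "l - m = 2 / (x0 + x1)"
    by (simp add: l_def m_def diff_divide_distrib[symmetric])
  then show "l \<noteq> m"
    using s by auto
  have prod: "l * m = (x2 + 1) * (x2 - 1) / (x0 + x1)^2"
    by (simp add: l_def m_def power2_eq_square)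
  have "1 + l * m = ((x0 + x1)^2 + (x2 + 1) * (x2 - 1)) / (x0 + x1)^2"
    using s by (simp add: prod field_simps)
  also have "(x0 + x1)^2 + (x2 + 1) * (x2 - 1) = x0 * 2 * (x0 + x1)"
    using X by (simp add: power2_eq_square algebra_simps)
  finally have "1 + l * m = x0 * (l - m)"
    using s by (simp add: lm power2_eq_square)
  moreover have "1 - l * m = ((x0 + x1)^2 - (x2 + 1) * (x2 - 1)) / (x0 + x1)^2"
    using s by (simp add: prod field_simps)
  moreover have "(x0 + x1)^2 - (x2 + 1) * (x2 - 1) = x1 * 2 * (x0 + x1)"
    using X by (simp add: power2_eq_square algebra_simps)
  moreover have "l + m = x2 * (l - m)"
    using s by (simp add: lm l_def m_def field_simps)
  ultimately show "zpar l m = (x0, x1, x2)"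
    using \<open>l \<noteq> m\<close> s by (simp add: zpar_def lm power2_eq_square)
qed

lemma zpar_surj:
  assumes "x \<in> Xset" "(snd (snd x))^2 \<noteq> 1"
  obtains l m where "l \<noteq> m" "zpar l m = x"
proof -
  obtain x0 x1 x2 where x: "x = (x0, x1, x2)"
    by (cases x) auto
  with assms have X: "x0^2 = x1^2 + x2^2 - 1" and x2: "x2^2 \<noteq> 1"
    by (simp_all add: Xset_def lform_def power2_eq_square)
  have "x0 + x1 \<noteq> 0"
  proof
    assume "x0 + x1 = 0"
    then have "x0^2 = x1^2"
      by (simp add: eq_neg_iff_add_eq_0[symmetric])
    with X x2 show False
      by simp
  qed
  with X show ?thesis
    using zpar_inverse that unfolding x by blast
qed

lemma zpar_decay_bound:
  assumes f: "zpar_decay f c" and x: "x \<in> Xset" "(snd (snd x))^2 \<noteq> 1"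
  shows "cmod (f x) \<le> c / sqrt ((fst (snd x))^2 + (snd (snd x))^2)"
proof -
  obtain l m where lm: "l \<noteq> m" "zpar l m = x"
    using zpar_surj[OF x] .
  define \<rho> where "\<rho> = sqrt ((fst (snd x))^2 + (snd (snd x))^2)"
  define w where "w = (1 + \<bar>l\<bar>) * (1 + \<bar>m\<bar>)"
  have w: "0 < w"
    by (simp add: w_def add_pos_nonneg)
  have \<rho>2: "\<rho>^2 = (1 + l^2) * (1 + m^2) / (l - m)^2"
    using zpar_spatial_norm[OF lm(1)] by (simp add: \<rho>_def lm(2))
  then have "(\<bar>l - m\<bar> * \<rho>)^2 = (1 + l^2) * (1 + m^2)"
    using lm(1) by (simp add: power_mult_distrib)
  also have "\<dots> \<le> w^2"
    unfolding w_def power_mult_distrib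
    by (intro mult_mono) (auto simp: power2_eq_square algebra_simps)
  finally have "\<bar>l - m\<bar> * \<rho> \<le> w"
    by (rule power2_le_imp_le[OF _ less_imp_le[OF w]])
  moreover have "0 < \<rho>"
  proof -
    have "0 < \<rho>^2"
      unfolding \<rho>2 using lm(1) by (intro divide_pos_pos mult_pos_pos) (auto simp: add_pos_nonneg)
    moreover have "0 \<le> \<rho>"
      by (simp add: \<rho>_def)
    ultimately show ?thesis
      by (metis less_eq_real_def zero_less_power2)
  qed
  ultimately have "\<bar>l - m\<bar> / w \<le> 1 / \<rho>"
    using w by (simp add: divide_simps mult.commute)
  have "cmod (f x) / \<bar>l - m\<bar> \<le> c / w"
    using f lm unfolding zpar_decay_def w_def by blast
  then have "cmod (f x) \<le> c * (\<bar>l - m\<bar> / w)"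
    using lm(1) by (simp add: pos_divide_le_eq)
  also have "\<dots> \<le> c * (1 / \<rho>)"
    using zpar_decay_nonneg[OF f] \<open>\<bar>l - m\<bar> / w \<le> 1 / \<rho>\<close> by (rule mult_left_mono[rotated])
  finally show ?thesis
    by (simp add: \<rho>_def)
qed

lemma norm_pmpow_le:
  "cmod (pmpow eps t s) \<le> \<bar>t\<bar> powr Re s * max (exp (- eps * pi * Im s)) 1"
proof -
  consider "0 < t" | "t < 0" | "t = 0"
    by linarith
  then show ?thesis
  proof cases
    case 1
    then have "cmod (pmpow eps t s) = \<bar>t\<bar> powr Re s"
      by (simp add: pmpow_def norm_exp_eq_Re powr_def)
    then show ?thesis
      by (simp add: mult_le_cancel_left1)
  next
    case 2
    then have "cmod (pmpow eps t s) = exp (- eps * pi * Im s) * \<bar>t\<bar> powr Re s"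
      by (simp add: pmpow_def norm_mult norm_exp_eq_Re powr_def)
    then show ?thesis
      by (simp add: mult.commute mult_left_mono)
  qed (simp add: pmpow_def)
qed

lemma lform_eq: "lform x y = fst x * fst y - fst (snd x) * fst (snd y) - snd (snd x) * snd (snd y)"
  by (simp add: lform_def split: prod.split)

lemma up_eq: "up p = (sqrt ((fst p)^2 + (snd p)^2 - 1), fst p, snd p)"
  and dn_eq: "dn p = (- sqrt ((fst p)^2 + (snd p)^2 - 1), fst p, snd p)"
  by (simp_all add: up_def dn_def split: prod.split)

lemma up_dn_in_Xset:
  assumes "1 < (fst p)^2 + (snd p)^2"
  shows "up p \<in> Xset" "dn p \<in> Xset"
  using assms by (simp_all add: Xset_def lform_eq up_eq dn_eq power2_eq_square)

lemma Cplus_decompose: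
  assumes "xi \<in> Cplus"
  obtains e1 e2 where "e1^2 + e2^2 = 1" "0 < fst xi" "xi = (fst xi, fst xi * e1, fst xi * e2)"
proof -
  obtain z0 z1 z2 where xi: "xi = (z0, z1, z2)"
    by (cases xi) auto
  with assms have z0: "0 < z0" and null: "z1^2 + z2^2 = z0^2"
    by (auto simp: Cplus_def lform_def power2_eq_square)
  show ?thesis
  proof (rule that)
    show "(z1 / z0)^2 + (z2 / z0)^2 = 1"
      using z0 null by (simp add: power_divide add_divide_distrib[symmetric])
  qed (use xi z0 in simp_all)
qed

definition cone_weight :: "real \<Rightarrow> real \<Rightarrow> pt3 \<Rightarrow> real" where
  "cone_weight e1 e2 x = \<bar>lform x (1, e1, e2)\<bar> powr (-1/2) / sqrt ((fst (snd x))^2 + (snd (snd x))^2)"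

lemma norm_FH_integrand_le:
  assumes f: "zpar_decay f c" and x: "x \<in> Xset" "(snd (snd x))^2 \<noteq> 1" and z0: "0 < z0"
  shows "cmod (pmpow eps (lform x (z0, z0 * e1, z0 * e2)) (- 1/2 - \<i> * of_real nu) * f x)
           \<le> c * z0 powr (-1/2) * max (exp (eps * pi * nu)) 1 * cone_weight e1 e2 x"
proof -
  have "lform x (z0, z0 * e1, z0 * e2) = z0 * lform x (1, e1, e2)"
    by (simp add: lform_eq algebra_simps)
  then have "cmod (pmpow eps (lform x (z0, z0 * e1, z0 * e2)) (- 1/2 - \<i> * of_real nu))
      \<le> z0 powr (-1/2) * \<bar>lform x (1, e1, e2)\<bar> powr (-1/2) * max (exp (eps * pi * nu)) 1"
    using norm_pmpow_le[of eps "z0 * lform x (1, e1, e2)" "- 1/2 - \<i> * of_real nu"] z0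
    by (simp add: abs_mult powr_mult)
  moreover have "cmod (f x) \<le> c / sqrt ((fst (snd x))^2 + (snd (snd x))^2)"
    by (rule zpar_decay_bound[OF f x])
  ultimately have "cmod (pmpow eps (lform x (z0, z0 * e1, z0 * e2)) (- 1/2 - \<i> * of_real nu) * f x)
      \<le> (z0 powr (-1/2) * \<bar>lform x (1, e1, e2)\<bar> powr (-1/2) * max (exp (eps * pi * nu)) 1)
        * (c / sqrt ((fst (snd x))^2 + (snd (snd x))^2))"
    unfolding norm_mult by (intro mult_mono) auto
  then show ?thesis
    by (simp add: cone_weight_def field_simps)
qed

definition sheet_density :: "real \<times> real \<Rightarrow> ennreal" where
  "sheet_density p = (if 1 < (fst p)^2 + (snd p)^2
     then ennreal (1 / (2 * sqrt ((fst p)^2 + (snd p)^2 - 1))) else 0)"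

lemma sheet_density_measurable [measurable]: "sheet_density \<in> borel_measurable lborel"
proof -
  have "sheet_density \<in> borel_measurable (lborel \<Otimes>\<^sub>M lborel)"
    unfolding sheet_density_def by measurable
  then show ?thesis
    by (simp add: lborel_prod)
qed

lemma mu2_eq_density: "mu2 = density lborel sheet_density"
  unfolding mu2_def sheet_density_def by (simp add: case_prod_beta')

lemma AE_mu2_regular: "AE p in mu2. 1 < (fst p)^2 + (snd p)^2 \<and> (snd p)^2 \<noteq> 1"
proof -
  have "(UNIV :: real set) \<times> {1, -1 :: real} \<in> null_sets (lborel \<Otimes>\<^sub>M lborel)"
    by (simp add: lborel.emeasure_pair_measure_Times null_sets_def emeasure_lborel_countable)
  then have "AE p in lborel \<Otimes>\<^sub>M lborel. snd (p :: real \<times> real) \<notin> {1, -1}"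
    by (rule AE_I') auto
  then have "AE p in lborel. snd (p :: real \<times> real) \<notin> {1, -1}"
    unfolding lborel_prod .
  then show ?thesis
    unfolding mu2_eq_density AE_density[OF sheet_density_measurable]
    by eventually_elim (auto simp: sheet_density_def power2_eq_1_iff split: if_splits)
qed

lemma cone_weight_sheets_measurable [measurable]:
  "(\<lambda>p. ennreal (cone_weight e1 e2 (up p))) \<in> borel_measurable lborel"
  "(\<lambda>p. ennreal (cone_weight e1 e2 (dn p))) \<in> borel_measurable lborel"
proof -
  have "(\<lambda>p. ennreal (cone_weight e1 e2 (up p))) \<in> borel_measurable (lborel \<Otimes>\<^sub>M lborel)"
       "(\<lambda>p. ennreal (cone_weight e1 e2 (dn p))) \<in> borel_measurable (lborel \<Otimes>\<^sub>M lborel)"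
    unfolding cone_weight_def lform_eq up_eq dn_eq by measurable
  then show "(\<lambda>p. ennreal (cone_weight e1 e2 (up p))) \<in> borel_measurable lborel"
            "(\<lambda>p. ennreal (cone_weight e1 e2 (dn p))) \<in> borel_measurable lborel"
    by (simp_all add: lborel_prod)
qed

lemma sheet_density_cone_weight:
  assumes e: "e1^2 + e2^2 = 1"
  shows "sheet_density p * (ennreal (cone_weight e1 e2 (up p)) + ennreal (cone_weight e1 e2 (dn p)))
           = ennreal (kernel (e1 * fst p + e2 * snd p) (- e2 * fst p + e1 * snd p))"
proof -
  define t w where "t = e1 * fst p + e2 * snd p" and "w = - e2 * fst p + e1 * snd p"
  have tw: "t^2 + w^2 = (fst p)^2 + (snd p)^2"
  proof -
    have "t^2 + w^2 = (e1^2 + e2^2) * ((fst p)^2 + (snd p)^2)"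
      by (simp add: t_def w_def power2_eq_square algebra_simps)
    then show ?thesis
      using e by simp
  qed
  show ?thesis
  proof (cases "1 < (fst p)^2 + (snd p)^2")
    case True
    define h r where "h = sqrt ((fst p)^2 + (snd p)^2 - 1)" and "r = sqrt ((fst p)^2 + (snd p)^2)"
    have "0 < h" "0 < r"
      using True by (auto simp: h_def r_def)
    have "lform (up p) (1, e1, e2) = h - t" "\<bar>lform (dn p) (1, e1, e2)\<bar> = \<bar>h + t\<bar>"
      by (simp_all add: lform_eq up_eq dn_eq h_def t_def abs_minus_commute algebra_simps)
    then have cw: "cone_weight e1 e2 (up p) = \<bar>h - t\<bar> powr (-1/2) / r"
         "cone_weight e1 e2 (dn p) = \<bar>h + t\<bar> powr (-1/2) / r"
      by (simp_all add: cone_weight_def r_def up_def dn_def split: prod.split)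
    have "kernel t w = (\<bar>h - t\<bar> powr (-1/2) + \<bar>h + t\<bar> powr (-1/2)) / (2 * h * r)"
      using True by (simp add: kernel_def tw h_def r_def)
    then have "kernel t w = 1 / (2 * h) * (cone_weight e1 e2 (up p) + cone_weight e1 e2 (dn p))"
      unfolding cw using \<open>0 < h\<close> \<open>0 < r\<close> by (simp add: field_simps)
    moreover have "sheet_density p = ennreal (1 / (2 * h))"
      using True by (simp add: sheet_density_def h_def)
    moreover have "ennreal (1 / (2 * h) * (a + b)) = ennreal (1 / (2 * h)) * (ennreal a + ennreal b)"
      if "0 \<le> a" "0 \<le> b" for a b
      using that \<open>0 < h\<close> by (subst ennreal_mult') (simp_all add: ennreal_plus)
    ultimately show ?thesis
      by (simp add: t_def w_def cone_weight_def)
  next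
    case False
    then have "kernel t w = 0"
      by (simp add: kernel_def tw)
    with False show ?thesis
      by (simp add: sheet_density_def t_def w_def)
  qed
qed

lemma nn_integral_cone_weight:
  assumes e: "e1^2 + e2^2 = 1"
  shows "(\<integral>\<^sup>+p. ennreal (cone_weight e1 e2 (up p)) \<partial>mu2) + (\<integral>\<^sup>+p. ennreal (cone_weight e1 e2 (dn p)) \<partial>mu2)
           = (\<integral>\<^sup>+p. ennreal (kernel (fst p) (snd p)) \<partial>lborel)"
proof -
  have "(\<integral>\<^sup>+p. ennreal (cone_weight e1 e2 (up p)) \<partial>mu2) + (\<integral>\<^sup>+p. ennreal (cone_weight e1 e2 (dn p)) \<partial>mu2)
      = (\<integral>\<^sup>+p. ennreal (cone_weight e1 e2 (up p)) + ennreal (cone_weight e1 e2 (dn p)) \<partial>mu2)"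
    unfolding mu2_eq_density by (rule nn_integral_add[symmetric]) simp_all
  also have "\<dots> = (\<integral>\<^sup>+p. sheet_density p * (ennreal (cone_weight e1 e2 (up p)) + ennreal (cone_weight e1 e2 (dn p))) \<partial>lborel)"
    unfolding mu2_eq_density by (rule nn_integral_density) simp_all
  also have "\<dots> = (\<integral>\<^sup>+p. ennreal (kernel (e1 * fst p + e2 * snd p) (- e2 * fst p + e1 * snd p)) \<partial>lborel)"
    by (simp add: sheet_density_cone_weight[OF e])
  also have "\<dots> = (\<integral>\<^sup>+p. ennreal (kernel (fst p) (snd p)) \<partial>lborel)"
    using nn_integral_lborel_rotation[of "\<lambda>q. ennreal (kernel (fst q) (snd q))", OF _ e] by simp
  finally show ?thesis .
qed

lemma norm_intX_le:
  "ennreal (cmod (intX g)) \<le> (\<integral>\<^sup>+p. ennreal (cmod (g (up p))) \<partial>mu2) + (\<integral>\<^sup>+p. ennreal (cmod (g (dn p))) \<partial>mu2)"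
proof -
  have norm_le: "ennreal (cmod (integral\<^sup>L mu2 h)) \<le> (\<integral>\<^sup>+p. ennreal (cmod (h p)) \<partial>mu2)" for h :: "real \<times> real \<Rightarrow> complex"
    by (cases "integrable mu2 h") (simp_all add: integral_norm_bound_ennreal not_integrable_integral_eq)
  have "ennreal (cmod (intX g)) \<le> ennreal (cmod (LINT p|mu2. g (up p)) + cmod (LINT p|mu2. g (dn p)))"
    unfolding intX_def by (intro ennreal_leI norm_triangle_ineq)
  also have "\<dots> = ennreal (cmod (LINT p|mu2. g (up p))) + ennreal (cmod (LINT p|mu2. g (dn p)))"
    by (simp add: ennreal_plus)
  also have "\<dots> \<le> (\<integral>\<^sup>+p. ennreal (cmod (g (up p))) \<partial>mu2) + (\<integral>\<^sup>+p. ennreal (cmod (g (dn p))) \<partial>mu2)"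
    by (intro add_mono norm_le)
  finally show ?thesis .
qed

lemma norm_intX_le_kernel:
  assumes e: "e1^2 + e2^2 = 1" and K: "0 \<le> K"
    and g: "\<And>x. x \<in> Xset \<Longrightarrow> (snd (snd x))^2 \<noteq> 1 \<Longrightarrow> cmod (g x) \<le> K * cone_weight e1 e2 x"
  shows "cmod (intX g) \<le> K * enn2real (\<integral>\<^sup>+p. ennreal (kernel (fst p) (snd p)) \<partial>lborel)"
proof -
  have AE_le: "AE p in mu2. ennreal (cmod (g (up p))) \<le> ennreal K * ennreal (cone_weight e1 e2 (up p))
                           \<and> ennreal (cmod (g (dn p))) \<le> ennreal K * ennreal (cone_weight e1 e2 (dn p))"
    using AE_mu2_regular
  proof eventually_elim
    case (elim p)
    then have "up p \<in> Xset" "dn p \<in> Xset"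
      by (simp_all add: up_dn_in_Xset)
    moreover have "(snd (snd (up p)))^2 \<noteq> 1" "(snd (snd (dn p)))^2 \<noteq> 1"
      using elim by (simp_all add: up_eq dn_eq)
    ultimately show ?case
      using K g by (simp add: ennreal_leI flip: ennreal_mult')
  qed
  have "ennreal (cmod (intX g)) \<le> (\<integral>\<^sup>+p. ennreal (cmod (g (up p))) \<partial>mu2) + (\<integral>\<^sup>+p. ennreal (cmod (g (dn p))) \<partial>mu2)"
    by (rule norm_intX_le)
  also have "\<dots> \<le> (\<integral>\<^sup>+p. ennreal K * ennreal (cone_weight e1 e2 (up p)) \<partial>mu2)
      + (\<integral>\<^sup>+p. ennreal K * ennreal (cone_weight e1 e2 (dn p)) \<partial>mu2)"
    using AE_le by (intro add_mono nn_integral_mono_AE) (auto elim: eventually_mono)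
  also have "\<dots> = ennreal K * (\<integral>\<^sup>+p. ennreal (kernel (fst p) (snd p)) \<partial>lborel)"
    by (simp add: nn_integral_cmult mu2_eq_density distrib_left[symmetric] nn_integral_cone_weight[OF e, unfolded mu2_eq_density])
  also have "\<dots> = ennreal (K * enn2real (\<integral>\<^sup>+p. ennreal (kernel (fst p) (snd p)) \<partial>lborel))"
    using nn_integral_kernel_finite K by (simp add: ennreal_mult ennreal_enn2real)
  finally show ?thesis
    using K by (subst (asm) ennreal_le_iff) auto
qed

lemma norm_FH_le:
  assumes f: "zpar_decay f c" and xi: "xi \<in> Cplus"
  shows "cmod (FH eps nu f xi)
           \<le> c * enn2real (\<integral>\<^sup>+p. ennreal (kernel (fst p) (snd p)) \<partial>lborel)
               * fst xi powr (-1/2) * max (exp (eps * pi * nu)) 1"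
proof -
  obtain e1 e2 where e: "e1^2 + e2^2 = 1" and z0: "0 < fst xi" and xi_eq: "xi = (fst xi, fst xi * e1, fst xi * e2)"
    using Cplus_decompose[OF xi] .
  define K where "K = c * fst xi powr (-1/2) * max (exp (eps * pi * nu)) 1"
  have "0 \<le> K"
    using zpar_decay_nonneg[OF f] by (simp add: K_def)
  have "cmod (FH eps nu f xi) \<le> K * enn2real (\<integral>\<^sup>+p. ennreal (kernel (fst p) (snd p)) \<partial>lborel)"
    unfolding FH_def
  proof (rule norm_intX_le_kernel[OF e \<open>0 \<le> K\<close>])
    fix x assume "x \<in> Xset" "(snd (snd x))^2 \<noteq> 1"
    from norm_FH_integrand_le[OF f this z0, of eps e1 e2 nu]
    show "cmod (pmpow eps (lform x xi) (- 1/2 - \<i> * of_real nu) * f x) \<le> K * cone_weight e1 e2 x"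
      unfolding K_def by (subst xi_eq) simp
  qed
  then show ?thesis
    by (simp add: K_def mult_ac)
qed

theorem proposition9:
  assumes "f \<in> Hreg"
  shows "\<exists>Cst. \<forall>eps \<in> {1, -1::real}. \<forall>xi \<in> Cplus. \<forall>nu::real.
           cmod (FH eps nu f xi) \<le> Cst * fst xi powr (-1/2) * max (exp (eps * pi * nu)) 1"
proof -
  obtain c where "zpar_decay f c"
    using Hreg_imp_zpar_decay[OF assms] by blast
  then show ?thesis
    using norm_FH_le by blast
qed

end
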